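(* Let $X(t)$ satisfy (A1)–(A2) and $\mathbf v:\mathcal S_n\to\mathbb R^d$. Let $\mathbf m^{\mathbf v}=(\min_jv_1(j),\dots,\min_jv_d(j))$ and $\mathbf M^{\mathbf v}=(\max_jv_1(j),\dots,\max_jv_d(j))$. Then for all $i,k\in\mathcal S_n$, all $\varepsilon>0$, all $t\ge0$ and all $\mathbf x\in\mathbb R^d$, \[ \begin{aligned} \mathbb P\{X(t)=i,X(t+\varepsilon)=k\}\,F^{\mathbf v}_i(t,\mathbf x-\varepsilon\mathbf M^{\mathbf v}) &\le\mathbb P\{X(t)=i,X(t+\varepsilon)=k,\mathbf L^{\mathbf v}(t+\varepsilon)\le\mathbf x\}\,\mathbb P\{X(t)=i\}\\ &\le\mathbb P\{X(t)=i,X(t+\varepsilon)=k\}\,F^{\mathbf v}_i(t,\mathbf x-\varepsilon\mathbf m^{\mathbf v}), \end{aligned} \] where comparisons of vectors are componentwise.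
   Context: (A1): $\{X(t)\}_{t\ge0}$ is a regular jump Markov process on $(\Omega,\mathcal F,\mathbb P)$ with values in $\mathcal S_n=\{1,\dots,n\}$, right-continuous trajectories, and transition rates $q_{ij}(t)$: $\mathbb P\{X(t+h)=j\mid X(t)=i\}=q_{ij}(t)h+o(h)$ for $j\ne i$. (A2): $Q(t)=(q_{ij}(t))$ is conservative ($q_i(t):=-q_{ii}(t)=\sum_{j\ne i}q_{ij}(t)$), continuous and bounded on $[0,\infty)$, and for each $i$ either $q_i\equiv0$ or $q_i>0$ everywhere with $\int_0^\infty q_i=\infty$. $\mathbf L^{\mathbf v}(t)=\int_0^t\mathbf v(X(s))\,ds$ and $F^{\mathbf v}_k(t,\mathbf x)=\mathbb P\{X(t)=k,\ \mathbf L^{\mathbf v}(t)\le\mathbf x\}$ (componentwise). *)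

theory Defs
  imports "HOL-Probability.Probability"
begin

text \<open>State space S_n = {1..n}. A process is X :: real => 'a => nat on a probability
  space M; only times t >= 0 are relevant. Vectors in R^d are real^'d, ordered
  componentwise (less_eq_vec_def).\<close>

definition state_event :: "'a measure \<Rightarrow> (real \<Rightarrow> 'a \<Rightarrow> nat) \<Rightarrow> real \<Rightarrow> nat \<Rightarrow> 'a set" where
  "state_event M X t i = {\<omega> \<in> space M. X t \<omega> = i}"

definition nat_filtration :: "'a measure \<Rightarrow> (real \<Rightarrow> 'a \<Rightarrow> nat) \<Rightarrow> real \<Rightarrow> 'a set set" where
  "nat_filtration M X s =
     sigma_sets (space M) (\<Union>u\<in>{0..s}. {state_event M X u j | j. True})"

text \<open>The Markov property is stated w.r.t. the natural filtration, in product form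
  (conditional independence of the future state and the past given the present).\<close>
definition regular_jump_markov ::
  "'a measure \<Rightarrow> nat \<Rightarrow> (real \<Rightarrow> 'a \<Rightarrow> nat) \<Rightarrow> (nat \<Rightarrow> nat \<Rightarrow> real \<Rightarrow> real) \<Rightarrow> bool" where
  "regular_jump_markov M n X q \<longleftrightarrow>
     prob_space M \<and>
     (\<forall>t\<ge>0. X t \<in> measurable M (count_space UNIV)) \<and>
     (\<forall>t\<ge>0. \<forall>\<omega>\<in>space M. X t \<omega> \<in> {1..n}) \<and>
     \<comment> \<open>right-continuous trajectories (discrete state space)\<close>
     (\<forall>\<omega>\<in>space M. \<forall>t\<ge>0. \<exists>\<delta>>0. \<forall>s\<in>{t..<t+\<delta>}. X s \<omega> = X t \<omega>) \<and>
     \<comment> \<open>regularity: left limits exist, hence finitely many jumps on bounded intervals\<close>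
     (\<forall>\<omega>\<in>space M. \<forall>t>0. \<exists>\<delta>>0. \<exists>j. \<forall>s\<in>{t-\<delta><..<t}. X s \<omega> = j) \<and>
     \<comment> \<open>Markov property\<close>
     (\<forall>s h i j A. 0 \<le> s \<longrightarrow> 0 \<le> h \<longrightarrow> A \<in> nat_filtration M X s \<longrightarrow>
        measure M (A \<inter> state_event M X s i \<inter> state_event M X (s+h) j) * measure M (state_event M X s i)
        = measure M (A \<inter> state_event M X s i) * measure M (state_event M X s i \<inter> state_event M X (s+h) j)) \<and>
     \<comment> \<open>transition rates: P{X(t+h)=j | X(t)=i} = q_ij(t) h + o(h), j \<noteq> i\<close>
     (\<forall>t\<ge>0. \<forall>i\<in>{1..n}. \<forall>j\<in>{1..n}. i \<noteq> j \<longrightarrow> measure M (state_event M X t i) > 0 \<longrightarrow>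
        ((\<lambda>h. (measure M (state_event M X t i \<inter> state_event M X (t+h) j) / measure M (state_event M X t i)
               - q i j t * h) / h) \<longlongrightarrow> 0) (at_right 0))"

definition total_rate :: "nat \<Rightarrow> (nat \<Rightarrow> nat \<Rightarrow> real \<Rightarrow> real) \<Rightarrow> nat \<Rightarrow> real \<Rightarrow> real" where
  "total_rate n q i t = - q i i t"

definition rate_assumptions :: "nat \<Rightarrow> (nat \<Rightarrow> nat \<Rightarrow> real \<Rightarrow> real) \<Rightarrow> bool" where
  "rate_assumptions n q \<longleftrightarrow>
     (\<forall>i\<in>{1..n}. \<forall>j\<in>{1..n}. i \<noteq> j \<longrightarrow> (\<forall>t\<ge>0. q i j t \<ge> 0)) \<and>
     (\<forall>i\<in>{1..n}. \<forall>t\<ge>0. total_rate n q i t = (\<Sum>j\<in>{1..n}-{i}. q i j t)) \<and>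
     (\<forall>i\<in>{1..n}. \<forall>j\<in>{1..n}. continuous_on {0..} (q i j)) \<and>
     (\<forall>i\<in>{1..n}. \<forall>j\<in>{1..n}. \<exists>B. \<forall>t\<ge>0. \<bar>q i j t\<bar> \<le> B) \<and>
     (\<forall>i\<in>{1..n}. (\<forall>t\<ge>0. total_rate n q i t = 0) \<or>
        ((\<forall>t\<ge>0. total_rate n q i t > 0) \<and>
         filterlim (\<lambda>T. integral {0..T} (total_rate n q i)) at_top at_top))"

definition occ :: "(nat \<Rightarrow> real^'d) \<Rightarrow> (real \<Rightarrow> 'a \<Rightarrow> nat) \<Rightarrow> real \<Rightarrow> 'a \<Rightarrow> real^'d" where
  "occ v X t \<omega> = integral {0..t} (\<lambda>s. v (X s \<omega>))"

definition Fv :: "'a measure \<Rightarrow> (nat \<Rightarrow> real^'d) \<Rightarrow> (real \<Rightarrow> 'a \<Rightarrow> nat) \<Rightarrow> nat \<Rightarrow> real \<Rightarrow> real^'d \<Rightarrow> real" where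
  "Fv M v X k t x = measure M {\<omega> \<in> space M. X t \<omega> = k \<and> occ v X t \<omega> \<le> x}"

definition vmin :: "nat \<Rightarrow> (nat \<Rightarrow> real^'d) \<Rightarrow> real^'d" where
  "vmin n v = (\<chi> c. Min ((\<lambda>j. v j $ c) ` {1..n}))"

definition vmax :: "nat \<Rightarrow> (nat \<Rightarrow> real^'d) \<Rightarrow> real^'d" where
  "vmax n v = (\<chi> c. Max ((\<lambda>j. v j $ c) ` {1..n}))"

end

theory Submission
  imports Defs
begin

text \<open>On \<open>[t, t+\<epsilon>]\<close> the path stays in \<open>S\<^sub>n\<close>, so the increment \<open>L(t+\<epsilon>) - L(t)\<close> lies
  componentwise between \<open>\<epsilon> m\<close> and \<open>\<epsilon> M\<close>. Hence the event
  \<open>{X(t) = i, X(t+\<epsilon>) = k, L(t+\<epsilon>) \<le> x}\<close> is squeezed between the events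
  \<open>{X(t) = i, X(t+\<epsilon>) = k, L(t) \<le> x - \<epsilon> M}\<close> and \<open>{X(t) = i, X(t+\<epsilon>) = k, L(t) \<le> x - \<epsilon> m}\<close>.
  Since \<open>L(t)\<close> is measurable with respect to the natural filtration at time \<open>t\<close>, the Markov
  property factorizes \<open>P{X(t) = i, X(t+\<epsilon>) = k, L(t) \<le> y} P{X(t) = i}\<close> as
  \<open>P{X(t) = i, X(t+\<epsilon>) = k} F\<^sub>i(t, y)\<close>, and monotonicity of \<open>P\<close> gives both inequalities.

  The measurability of \<open>L(t)\<close> comes from right-continuity: sampling the path at times rounded
  up to the grid of mesh \<open>1/(N+1)\<close> gives integrals that depend on finitely many \<open>X(p)\<close>,
  \<open>p \<le> t\<close>, and converge to \<open>L(t)\<close> by dominated convergence.\<close>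

definition grid_ceiling :: "real \<Rightarrow> nat \<Rightarrow> real \<Rightarrow> real" where
  "grid_ceiling T N s = min T (real_of_int \<lceil>s * real (Suc N)\<rceil> / real (Suc N))"

lemma grid_ceiling_ge: "s \<le> T \<Longrightarrow> s \<le> grid_ceiling T N s"
  unfolding grid_ceiling_def by (simp add: le_divide_eq)

lemma grid_ceiling_le: "grid_ceiling T N s \<le> T"
  unfolding grid_ceiling_def by simp

lemma grid_ceiling_less: "grid_ceiling T N s < s + 1 / real (Suc N)"
proof -
  have "real_of_int \<lceil>s * real (Suc N)\<rceil> < (s + 1 / real (Suc N)) * real (Suc N)"
    using ceiling_correct[of "s * real (Suc N)"] by (simp add: distrib_right)
  then have "real_of_int \<lceil>s * real (Suc N)\<rceil> / real (Suc N) < s + 1 / real (Suc N)"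
    by (simp add: divide_less_eq del: of_nat_Suc)
  then show ?thesis
    unfolding grid_ceiling_def by linarith
qed

lemma grid_ceiling_mem: "s \<in> {0..T} \<Longrightarrow> grid_ceiling T N s \<in> {0..T}"
  using grid_ceiling_ge[of s T N] grid_ceiling_le[of T N s] by auto

lemma finite_grid_ceiling_image: "finite (grid_ceiling T N ` {0..T})"
proof (rule finite_subset)
  show "grid_ceiling T N ` {0..T} \<subseteq>
      (\<lambda>j. min T (real_of_int j / real (Suc N))) ` {0..\<lceil>T * real (Suc N)\<rceil>}"
    unfolding grid_ceiling_def
    by (auto intro!: imageI ceiling_mono mult_right_mono less_le_trans[OF _ mult_nonneg_nonneg])
qed simp

lemma borel_measurable_comp_grid_ceiling:
  "(\<lambda>s. G (grid_ceiling T N s)) \<in> borel_measurable borel"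
proof -
  have "(\<lambda>s. (\<lambda>j _. G (min T (real_of_int j / real (Suc N)))) \<lceil>s * real (Suc N)\<rceil> s)
      \<in> borel_measurable borel"
    by (rule measurable_compose_countable) measurable
  then show ?thesis
    unfolding grid_ceiling_def .
qed

lemma tendsto_comp_grid_ceiling:
  assumes "s \<le> T" and "\<delta> > 0" and const: "\<And>u. u \<in> {s..<s+\<delta>} \<Longrightarrow> g u = g s"
  shows "(\<lambda>N. g (grid_ceiling T N s)) \<longlonglongrightarrow> g s"
proof (rule tendsto_eventually)
  obtain N0 where N0: "inverse (real (Suc N0)) < \<delta>"
    using reals_Archimedean[OF \<open>\<delta> > 0\<close>] by blast
  have "g (grid_ceiling T N s) = g s" if "N \<ge> N0" for N
  proof (rule const)
    have "1 / real (Suc N) \<le> inverse (real (Suc N0))"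
      using that by (simp add: divide_inverse le_imp_inverse_le)
    then show "grid_ceiling T N s \<in> {s..<s+\<delta>}"
      using grid_ceiling_ge[OF \<open>s \<le> T\<close>] grid_ceiling_less[of T N s] N0 by auto
  qed
  then show "\<forall>\<^sub>F N in sequentially. g (grid_ceiling T N s) = g s"
    by (rule eventually_sequentiallyI)
qed

lemma integrable_and_tendsto_integral_comp_grid_ceiling:
  fixes g :: "real \<Rightarrow> 'b::euclidean_space"
  assumes bounded: "\<And>s. s \<in> {0..T} \<Longrightarrow> norm (g s) \<le> B"
    and right_const: "\<And>s. s \<in> {0..T} \<Longrightarrow> \<exists>\<delta>>0. \<forall>u\<in>{s..<s+\<delta>}. g u = g s"
  shows "g integrable_on {0..T}"
    and "(\<lambda>N. integral {0..T} (\<lambda>s. g (grid_ceiling T N s))) \<longlonglongrightarrow> integral {0..T} g"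
proof -
  have "(\<lambda>s. g (grid_ceiling T N s)) absolutely_integrable_on {0..T}" for N
  proof (rule measurable_bounded_by_integrable_imp_absolutely_integrable)
    show "(\<lambda>s. g (grid_ceiling T N s)) \<in> borel_measurable (lebesgue_on {0..T})"
      using measurable_comp[OF id_borel_measurable_lebesgue_on borel_measurable_comp_grid_ceiling]
      by (simp add: o_def)
  qed (use bounded grid_ceiling_mem in auto)
  then have "(\<lambda>s. g (grid_ceiling T N s)) integrable_on {0..T}" for N
    using set_lebesgue_integral_eq_integral(1) by blast
  moreover have "(\<lambda>N. g (grid_ceiling T N s)) \<longlonglongrightarrow> g s" if "s \<in> {0..T}" for s
    using right_const[OF that] that by (auto intro: tendsto_comp_grid_ceiling)
  ultimately show "g integrable_on {0..T}"
    and "(\<lambda>N. integral {0..T} (\<lambda>s. g (grid_ceiling T N s))) \<longlonglongrightarrow> integral {0..T} g"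
    using dominated_convergence[where f="\<lambda>N s. g (grid_ceiling T N s)" and h="\<lambda>_. B"
        and S="{0..T}" and g=g] bounded grid_ceiling_mem integrable_const_ivl[of B 0 T] by auto
qed

lemma measurable_finite_restrict:
  fixes Y :: "'i \<Rightarrow> 'a \<Rightarrow> 'c::countable"
  assumes "finite P" and "\<And>p. p \<in> P \<Longrightarrow> Y p \<in> measurable N (count_space UNIV)"
  shows "(\<lambda>\<omega>. \<Phi> (restrict (\<lambda>p. Y p \<omega>) P)) \<in> borel_measurable N"
  using assms
proof (induction P arbitrary: \<Phi> rule: finite_induct)
  case empty
  then show ?case by simp
next
  case (insert p P)
  have restrict_insert: "(restrict (\<lambda>q. Y q \<omega>) P)(p := Y p \<omega>) = restrict (\<lambda>q. Y q \<omega>) (insert p P)"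
    for \<omega> using insert(2) by (auto simp: restrict_def)
  have "(\<lambda>\<omega>. (\<lambda>j _. \<Phi> ((restrict (\<lambda>q. Y q \<omega>) P)(p := j))) (Y p \<omega>) \<omega>) \<in> borel_measurable N"
    by (rule measurable_compose_countable) (use insert in auto)
  then show ?case
    by (simp only: restrict_insert)
qed

lemma integral_increment_bounds:
  fixes f :: "real \<Rightarrow> real^'d"
  assumes f: "f integrable_on {a..b+h}" and "a \<le> b" and "0 \<le> h"
    and between: "\<And>s. s \<in> {b..b+h} \<Longrightarrow> lo \<le> f s \<and> f s \<le> hi"
  shows "integral {a..b} f + h *\<^sub>R lo \<le> integral {a..b+h} f"
    and "integral {a..b+h} f \<le> integral {a..b} f + h *\<^sub>R hi"
proof -
  have split: "integral {a..b+h} f = integral {a..b} f + integral {b..b+h} f"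
    using Henstock_Kurzweil_Integration.integral_combine[OF _ _ f] assms by simp
  have f_tail: "f integrable_on {b..b+h}"
    by (rule integrable_subinterval_real[OF f]) (use assms in auto)
  then have f_tail_comp: "(\<lambda>s. f s $ c) integrable_on {b..b+h}" for c
    using integrable_linear[OF _ bounded_linear_vec_nth] by (auto simp: o_def)
  have "h * lo $ c \<le> integral {b..b+h} f $ c" for c
    using integral_le[OF integrable_const_ivl f_tail_comp, of "lo $ c"] between
    by (simp add: f_tail less_eq_vec_def \<open>0 \<le> h\<close>)
  moreover have "integral {b..b+h} f $ c \<le> h * hi $ c" for c
    using integral_le[OF f_tail_comp integrable_const_ivl, of c "hi $ c"] between
    by (simp add: f_tail less_eq_vec_def \<open>0 \<le> h\<close>)
  ultimately show "integral {a..b} f + h *\<^sub>R lo \<le> integral {a..b+h} f"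
    and "integral {a..b+h} f \<le> integral {a..b} f + h *\<^sub>R hi"
    unfolding split less_eq_vec_def by simp_all
qed

lemma vmin_le: "j \<in> {1..n} \<Longrightarrow> vmin n v \<le> v j"
  unfolding vmin_def less_eq_vec_def by (auto intro: Min_le)

lemma le_vmax: "j \<in> {1..n} \<Longrightarrow> v j \<le> vmax n v"
  unfolding vmax_def less_eq_vec_def by (auto intro: Max_ge)

lemma
  assumes "regular_jump_markov M n X q"
  shows regular_jump_markov_prob_space: "prob_space M"
    and regular_jump_markov_measurable: "0 \<le> t \<Longrightarrow> X t \<in> measurable M (count_space UNIV)"
    and regular_jump_markov_range: "\<omega> \<in> space M \<Longrightarrow> 0 \<le> t \<Longrightarrow> X t \<omega> \<in> {1..n}"
    and regular_jump_markov_right_const: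
      "\<omega> \<in> space M \<Longrightarrow> 0 \<le> t \<Longrightarrow> \<exists>\<delta>>0. \<forall>s\<in>{t..<t+\<delta>}. X s \<omega> = X t \<omega>"
    and regular_jump_markov_property: "0 \<le> s \<Longrightarrow> 0 \<le> h \<Longrightarrow> A \<in> nat_filtration M X s \<Longrightarrow>
      measure M (A \<inter> state_event M X s i \<inter> state_event M X (s+h) j) * measure M (state_event M X s i)
      = measure M (A \<inter> state_event M X s i) * measure M (state_event M X s i \<inter> state_event M X (s+h) j)"
  using assms unfolding regular_jump_markov_def by simp_all

lemma
  fixes v :: "nat \<Rightarrow> real^'d"
  assumes "regular_jump_markov M n X q" and "\<omega> \<in> space M"
  shows integrable_occupation: "(\<lambda>s. v (X s \<omega>)) integrable_on {0..T}"
    and tendsto_occ_grid_ceiling: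
      "(\<lambda>N. integral {0..T} (\<lambda>s. v (X (grid_ceiling T N s) \<omega>))) \<longlonglongrightarrow> occ v X T \<omega>"
proof -
  have bounded: "norm (v (X s \<omega>)) \<le> Max ((\<lambda>j. norm (v j)) ` {1..n})" if "s \<in> {0..T}" for s
    using regular_jump_markov_range[OF assms, of s] that by (intro Max_ge) auto
  have right_const: "\<exists>\<delta>>0. \<forall>u\<in>{s..<s+\<delta>}. v (X u \<omega>) = v (X s \<omega>)" if "s \<in> {0..T}" for s
    using regular_jump_markov_right_const[OF assms, of s] that by (metis atLeastAtMost_iff)
  from integrable_and_tendsto_integral_comp_grid_ceiling[OF bounded right_const]
  show "(\<lambda>s. v (X s \<omega>)) integrable_on {0..T}"
    and "(\<lambda>N. integral {0..T} (\<lambda>s. v (X (grid_ceiling T N s) \<omega>))) \<longlonglongrightarrow> occ v X T \<omega>"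
    unfolding occ_def by blast+
qed

lemma occ_increment_bounds:
  assumes "regular_jump_markov M n X q" and "\<omega> \<in> space M" and "0 \<le> t" and "0 \<le> \<epsilon>"
  shows "occ v X t \<omega> + \<epsilon> *\<^sub>R vmin n v \<le> occ v X (t+\<epsilon>) \<omega>"
    and "occ v X (t+\<epsilon>) \<omega> \<le> occ v X t \<omega> + \<epsilon> *\<^sub>R vmax n v"
proof -
  have "vmin n v \<le> v (X s \<omega>) \<and> v (X s \<omega>) \<le> vmax n v" if "s \<in> {t..t+\<epsilon>}" for s
    using regular_jump_markov_range[OF assms(1,2), of s] that assms(3) by (simp add: vmin_le le_vmax)
  from integral_increment_bounds[OF integrable_occupation[OF assms(1,2), of v "t+\<epsilon>"] assms(3,4) this]
  show "occ v X t \<omega> + \<epsilon> *\<^sub>R vmin n v \<le> occ v X (t+\<epsilon>) \<omega>"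
    and "occ v X (t+\<epsilon>) \<omega> \<le> occ v X t \<omega> + \<epsilon> *\<^sub>R vmax n v"
    unfolding occ_def by auto
qed

definition nat_filtration_measure :: "'a measure \<Rightarrow> (real \<Rightarrow> 'a \<Rightarrow> nat) \<Rightarrow> real \<Rightarrow> 'a measure" where
  "nat_filtration_measure M X T = sigma (space M) (\<Union>u\<in>{0..T}. {state_event M X u j | j. True})"

lemma state_event_generators_subset: "(\<Union>u\<in>U. {state_event M X u j | j. True}) \<subseteq> Pow (space M)"
  unfolding state_event_def by auto

lemma space_nat_filtration_measure [simp]: "space (nat_filtration_measure M X T) = space M"
  unfolding nat_filtration_measure_def using state_event_generators_subset by (rule space_measure_of)

lemma sets_nat_filtration_measure [simp]: "sets (nat_filtration_measure M X T) = nat_filtration M X T"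
  unfolding nat_filtration_measure_def nat_filtration_def
  using state_event_generators_subset by (rule sets_measure_of)

lemma state_event_in_nat_filtration: "u \<in> {0..T} \<Longrightarrow> state_event M X u j \<in> nat_filtration M X T"
  unfolding nat_filtration_def by (rule sigma_sets.Basic) blast

lemma measurable_nat_filtration_measure:
  assumes "p \<in> {0..T}"
  shows "X p \<in> measurable (nat_filtration_measure M X T) (count_space UNIV)"
  unfolding measurable_count_space_eq2_countable
proof (intro conjI ballI)
  fix j
  have "X p -` {j} \<inter> space M = state_event M X p j"
    unfolding state_event_def by auto
  then show "X p -` {j} \<inter> space (nat_filtration_measure M X T) \<in> sets (nat_filtration_measure M X T)"
    using state_event_in_nat_filtration[OF assms] by simp
qed simp

lemma nat_filtration_subset_sets:
  assumes "regular_jump_markov M n X q"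
  shows "nat_filtration M X T \<subseteq> sets M"
  unfolding nat_filtration_def
proof (rule sets.sigma_sets_subset)
  have "X u -` {j} \<inter> space M \<in> sets M" if "0 \<le> u" for u j
    using regular_jump_markov_measurable[OF assms that] by (rule measurable_sets) simp
  moreover have "X u -` {j} \<inter> space M = state_event M X u j" for u j
    unfolding state_event_def by auto
  ultimately show "(\<Union>u\<in>{0..T}. {state_event M X u j |j. True}) \<subseteq> sets M"
    by auto
qed

lemma occ_measurable_nat_filtration_measure:
  fixes v :: "nat \<Rightarrow> real^'d"
  assumes "regular_jump_markov M n X q"
  shows "occ v X T \<in> borel_measurable (nat_filtration_measure M X T)"
proof (rule borel_measurable_LIMSEQ_metric)
  fix N
  let ?grid = "grid_ceiling T N ` {0..T}"
  have "(\<lambda>\<omega>. (\<lambda>y. integral {0..T} (\<lambda>s. v (y (grid_ceiling T N s)))) (restrict (\<lambda>p. X p \<omega>) ?grid))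
      \<in> borel_measurable (nat_filtration_measure M X T)"
    by (rule measurable_finite_restrict[OF finite_grid_ceiling_image])
      (auto intro: measurable_nat_filtration_measure grid_ceiling_mem)
  moreover have "integral {0..T} (\<lambda>s. v (restrict (\<lambda>p. X p \<omega>) ?grid (grid_ceiling T N s)))
      = integral {0..T} (\<lambda>s. v (X (grid_ceiling T N s) \<omega>))" for \<omega>
    by (rule integral_cong) auto
  ultimately show "(\<lambda>\<omega>. integral {0..T} (\<lambda>s. v (X (grid_ceiling T N s) \<omega>)))
      \<in> borel_measurable (nat_filtration_measure M X T)"
    by simp
next
  fix \<omega>
  assume "\<omega> \<in> space (nat_filtration_measure M X T)"
  then show "(\<lambda>N. integral {0..T} (\<lambda>s. v (X (grid_ceiling T N s) \<omega>))) \<longlonglongrightarrow> occ v X T \<omega>"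
    using tendsto_occ_grid_ceiling[OF assms] by simp
qed

lemma occ_le_in_nat_filtration:
  fixes v :: "nat \<Rightarrow> real^'d"
  assumes "regular_jump_markov M n X q"
  shows "{\<omega> \<in> space M. occ v X T \<omega> \<le> y} \<in> nat_filtration M X T"
proof -
  have "occ v X T -` {..y} \<inter> space (nat_filtration_measure M X T) \<in> sets (nat_filtration_measure M X T)"
    using occ_measurable_nat_filtration_measure[OF assms] by (rule measurable_sets) simp
  moreover have "occ v X T -` {..y} \<inter> space M = {\<omega> \<in> space M. occ v X T \<omega> \<le> y}"
    by auto
  ultimately show ?thesis
    by simp
qed

lemma states_occ_le_in_sets:
  fixes v :: "nat \<Rightarrow> real^'d"
  assumes "regular_jump_markov M n X q" and "0 \<le> t" and "0 \<le> u"
  shows "{\<omega> \<in> space M. X t \<omega> = i \<and> X u \<omega> = k \<and> occ v X s \<omega> \<le> y} \<in> sets M"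
proof -
  have "{\<omega> \<in> space M. X t \<omega> = i \<and> X u \<omega> = k \<and> occ v X s \<omega> \<le> y}
      = state_event M X t i \<inter> state_event M X u k \<inter> {\<omega> \<in> space M. occ v X s \<omega> \<le> y}"
    unfolding state_event_def by auto
  moreover have "{\<omega> \<in> space M. occ v X s \<omega> \<le> y} \<in> sets M"
    using occ_le_in_nat_filtration[OF assms(1)] nat_filtration_subset_sets[OF assms(1)] by blast
  moreover have "state_event M X r j \<in> sets M" if "0 \<le> r" for r j
    using state_event_in_nat_filtration[of r r M X j] nat_filtration_subset_sets[OF assms(1), of r] that by auto
  ultimately show ?thesis
    using assms(2,3) by auto
qed

lemma occ_markov_factorization:
  fixes v :: "nat \<Rightarrow> real^'d"
  assumes "regular_jump_markov M n X q" and "0 \<le> t" and "0 \<le> h"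
  shows "measure M {\<omega> \<in> space M. X t \<omega> = i \<and> X (t+h) \<omega> = k} * Fv M v X i t y
         = measure M {\<omega> \<in> space M. X t \<omega> = i \<and> X (t+h) \<omega> = k \<and> occ v X t \<omega> \<le> y}
           * measure M {\<omega> \<in> space M. X t \<omega> = i}"
proof -
  let ?A = "{\<omega> \<in> space M. X t \<omega> = i}"
  have "{\<omega> \<in> space M. occ v X t \<omega> \<le> y} \<inter> ?A = {\<omega> \<in> space M. X t \<omega> = i \<and> occ v X t \<omega> \<le> y}"
    and "{\<omega> \<in> space M. X t \<omega> = i \<and> occ v X t \<omega> \<le> y} \<inter> {\<omega> \<in> space M. X (t+h) \<omega> = k}
      = {\<omega> \<in> space M. X t \<omega> = i \<and> X (t+h) \<omega> = k \<and> occ v X t \<omega> \<le> y}"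
    and "?A \<inter> {\<omega> \<in> space M. X (t+h) \<omega> = k} = {\<omega> \<in> space M. X t \<omega> = i \<and> X (t+h) \<omega> = k}"
    by auto
  then have "measure M {\<omega> \<in> space M. X t \<omega> = i \<and> X (t+h) \<omega> = k \<and> occ v X t \<omega> \<le> y} * measure M ?A
      = Fv M v X i t y * measure M {\<omega> \<in> space M. X t \<omega> = i \<and> X (t+h) \<omega> = k}"
    using regular_jump_markov_property[OF assms occ_le_in_nat_filtration[OF assms(1), of v t y], where i=i and j=k]
    unfolding Fv_def state_event_def by simp
  then show ?thesis
    by (simp add: mult.commute)
qed

theorem lemma3:
  fixes M :: "'a measure" and n :: nat and X :: "real \<Rightarrow> 'a \<Rightarrow> nat"
    and q :: "nat \<Rightarrow> nat \<Rightarrow> real \<Rightarrow> real" and v :: "nat \<Rightarrow> real^'d"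
    and i k :: nat and \<epsilon> t :: real and x :: "real^'d"
  assumes A1: "regular_jump_markov M n X q"
    and A2: "rate_assumptions n q"
    and i: "i \<in> {1..n}" and k: "k \<in> {1..n}"
    and eps: "\<epsilon> > 0" and t: "t \<ge> 0"
  shows "measure M {\<omega> \<in> space M. X t \<omega> = i \<and> X (t+\<epsilon>) \<omega> = k} * Fv M v X i t (x - \<epsilon> *\<^sub>R vmax n v)
           \<le> measure M {\<omega> \<in> space M. X t \<omega> = i \<and> X (t+\<epsilon>) \<omega> = k \<and> occ v X (t+\<epsilon>) \<omega> \<le> x}
             * measure M {\<omega> \<in> space M. X t \<omega> = i}
       \<and> measure M {\<omega> \<in> space M. X t \<omega> = i \<and> X (t+\<epsilon>) \<omega> = k \<and> occ v X (t+\<epsilon>) \<omega> \<le> x}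
             * measure M {\<omega> \<in> space M. X t \<omega> = i}
           \<le> measure M {\<omega> \<in> space M. X t \<omega> = i \<and> X (t+\<epsilon>) \<omega> = k} * Fv M v X i t (x - \<epsilon> *\<^sub>R vmin n v)"
proof -
  interpret prob_space M
    using A1 by (rule regular_jump_markov_prob_space)
  let ?E = "\<lambda>s y. {\<omega> \<in> space M. X t \<omega> = i \<and> X (t+\<epsilon>) \<omega> = k \<and> occ v X s \<omega> \<le> y}"
  have "?E t (x - \<epsilon> *\<^sub>R vmax n v) \<subseteq> ?E (t+\<epsilon>) x" and "?E (t+\<epsilon>) x \<subseteq> ?E t (x - \<epsilon> *\<^sub>R vmin n v)"
    using occ_increment_bounds[OF A1 _ t, of _ \<epsilon> v] eps by (auto simp: le_diff_eq intro: order_trans)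
  moreover have "?E s y \<in> sets M" for s y
    using states_occ_le_in_sets[OF A1 t, of "t+\<epsilon>"] eps t by simp
  ultimately have "measure M (?E t (x - \<epsilon> *\<^sub>R vmax n v)) \<le> measure M (?E (t+\<epsilon>) x)"
    and "measure M (?E (t+\<epsilon>) x) \<le> measure M (?E t (x - \<epsilon> *\<^sub>R vmin n v))"
    by (auto intro: finite_measure_mono)
  moreover have "measure M {\<omega> \<in> space M. X t \<omega> = i \<and> X (t+\<epsilon>) \<omega> = k} * Fv M v X i t y
      = measure M (?E t y) * measure M {\<omega> \<in> space M. X t \<omega> = i}" for y
    using eps by (intro occ_markov_factorization[OF A1 t]) simp
  ultimately show ?thesis
    by (simp add: mult_right_mono)
qed

end
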